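(* Let $\Gamma=(V,E)$ be a graph, for each $v\in V$ let $C_v$ be a right cancellative monoid, and let $C=\Gamma_{v\in V}C_v$. Let $c$ be a non-unit of $C_v$ and $d$ a non-unit of $C_u$, where $(u,v)\in E$. Then $Cc\cap Cd=Ccd$.
   Context: A graph $\Gamma=(V,E)$ has vertex set $V$ and irreflexive symmetric edge relation $E$. The graph product $\Gamma_{v\in V}C_v$ of pairwise disjoint monoids $C_v$ is the quotient of their free product by the congruence generated by all pairs $(mn,nm)$ with $m\in C_u$, $n\in C_v$, $(u,v)\in E$; each $C_v$ is identified with its image in $C$. *)

theory Defs
  imports "HOL-Algebra.Group"
begin

definition is_graph :: "'v set \<Rightarrow> ('v \<times> 'v) set \<Rightarrow> bool" where
  "is_graph V E \<longleftrightarrow> E \<subseteq> V \<times> V \<and> (\<forall>v. (v, v) \<notin> E) \<and> (\<forall>u v. (u, v) \<in> E \<longrightarrow> (v, u) \<in> E)"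

definition right_cancellative_monoid :: "('a, 'b) monoid_scheme \<Rightarrow> bool" where
  "right_cancellative_monoid M \<longleftrightarrow> monoid M \<and>
     (\<forall>a\<in>carrier M. \<forall>b\<in>carrier M. \<forall>c\<in>carrier M. a \<otimes>\<^bsub>M\<^esub> c = b \<otimes>\<^bsub>M\<^esub> c \<longrightarrow> a = b)"

text \<open>Words of the free product: lists of letters (v, a) with a in C_v; tagging by the
  vertex makes the monoids pairwise disjoint.\<close>
definition gp_words :: "('v \<Rightarrow> 'a monoid) \<Rightarrow> 'v set \<Rightarrow> ('v \<times> 'a) list set" where
  "gp_words C V = {w. \<forall>(v, a)\<in>set w. v \<in> V \<and> a \<in> carrier (C v)}"

inductive gp_eq :: "('v \<Rightarrow> 'a monoid) \<Rightarrow> 'v set \<Rightarrow> ('v \<times> 'v) set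
    \<Rightarrow> ('v \<times> 'a) list \<Rightarrow> ('v \<times> 'a) list \<Rightarrow> bool"
  for C V E where
  gp_refl: "w \<in> gp_words C V \<Longrightarrow> gp_eq C V E w w"
| gp_sym: "gp_eq C V E w w' \<Longrightarrow> gp_eq C V E w' w"
| gp_trans: "gp_eq C V E w w' \<Longrightarrow> gp_eq C V E w' w'' \<Longrightarrow> gp_eq C V E w w''"
| gp_mult: "xs \<in> gp_words C V \<Longrightarrow> ys \<in> gp_words C V \<Longrightarrow> v \<in> V \<Longrightarrow>
     a \<in> carrier (C v) \<Longrightarrow> b \<in> carrier (C v) \<Longrightarrow>
     gp_eq C V E (xs @ [(v, a), (v, b)] @ ys) (xs @ [(v, a \<otimes>\<^bsub>C v\<^esub> b)] @ ys)"
| gp_unit: "xs \<in> gp_words C V \<Longrightarrow> ys \<in> gp_words C V \<Longrightarrow> v \<in> V \<Longrightarrow>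
     gp_eq C V E (xs @ [(v, \<one>\<^bsub>C v\<^esub>)] @ ys) (xs @ ys)"
| gp_comm: "xs \<in> gp_words C V \<Longrightarrow> ys \<in> gp_words C V \<Longrightarrow> (u, v) \<in> E \<Longrightarrow>
     a \<in> carrier (C u) \<Longrightarrow> b \<in> carrier (C v) \<Longrightarrow>
     gp_eq C V E (xs @ [(u, a), (v, b)] @ ys) (xs @ [(v, b), (u, a)] @ ys)"

definition gp_rel :: "('v \<Rightarrow> 'a monoid) \<Rightarrow> 'v set \<Rightarrow> ('v \<times> 'v) set
    \<Rightarrow> (('v \<times> 'a) list \<times> ('v \<times> 'a) list) set" where
  "gp_rel C V E = {(w, w'). gp_eq C V E w w'}"

definition graph_product :: "('v \<Rightarrow> 'a monoid) \<Rightarrow> 'v set \<Rightarrow> ('v \<times> 'v) set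
    \<Rightarrow> ('v \<times> 'a) list set monoid" where
  "graph_product C V E =
     \<lparr> carrier = gp_words C V // gp_rel C V E,
       mult = (\<lambda>X Y. \<Union>x\<in>X. \<Union>y\<in>Y. gp_rel C V E `` {x @ y}),
       one = gp_rel C V E `` {[]} \<rparr>"

definition gp_inj :: "('v \<Rightarrow> 'a monoid) \<Rightarrow> 'v set \<Rightarrow> ('v \<times> 'v) set
    \<Rightarrow> 'v \<Rightarrow> 'a \<Rightarrow> ('v \<times> 'a) list set" where
  "gp_inj C V E v a = gp_rel C V E `` {[(v, a)]}"

end

theory Submission
  imports Defs
begin

text \<open>Words are brought into a normal form, unique up to swapping adjacent commuting letters,
  by appending letters one at a time and multiplying each into the last letter of its vertex
  that it can be commuted up to. The property ``up to such swaps, the word ends in a u-letter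
  lying in \<open>C\<^sub>u d\<close>'' is invariant under the swaps and under appending letters from
  \<open>C\<^sub>v\<close>, as v commutes with u. It holds for every word ending in d: merging d into an
  earlier u-letter h gives h d, which is not 1 since by right cancellativity h d = 1 would make
  d a unit. Hence x c = y d in C forces x \<in> C d, so x c \<in> C d c = C c d.\<close>

lemma right_cancellative_Units_of_left_inverse:
  fixes M (structure)
  assumes M: "right_cancellative_monoid M"
    and h: "h \<in> carrier M" and g: "g \<in> carrier M" and hg: "h \<otimes> g = \<one>"
  shows "g \<in> Units M"
proof -
  interpret monoid M using M by (simp add: right_cancellative_monoid_def)
  have "(g \<otimes> h) \<otimes> g = \<one> \<otimes> g"
    using g h hg by (simp add: m_assoc)
  then show ?thesis
    using M g h hg unfolding right_cancellative_monoid_def Units_def by blast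
qed

locale graph_product_setting =
  fixes C :: "'v \<Rightarrow> 'a monoid" and V :: "'v set" and E :: "('v \<times> 'v) set"
  assumes graph: "is_graph V E"
    and factor_right_cancellative: "\<And>v. v \<in> V \<Longrightarrow> right_cancellative_monoid (C v)"
begin

lemma edge_sym: "(a, b) \<in> E \<Longrightarrow> (b, a) \<in> E"
  using graph unfolding is_graph_def by blast

lemma edge_irrefl [simp]: "(a, a) \<notin> E"
  using graph unfolding is_graph_def by blast

lemma edge_vertices: "(a, b) \<in> E \<Longrightarrow> a \<in> V \<and> b \<in> V"
  using graph unfolding is_graph_def by blast

lemma factor_monoid: "s \<in> V \<Longrightarrow> monoid (C s)"
  using factor_right_cancellative unfolding right_cancellative_monoid_def by blast

inductive swap_equiv :: "('v \<times> 'a) list \<Rightarrow> ('v \<times> 'a) list \<Rightarrow> bool" where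
  swap_refl: "swap_equiv L L"
| swap_sym: "swap_equiv L L' \<Longrightarrow> swap_equiv L' L"
| swap_trans: "swap_equiv L L' \<Longrightarrow> swap_equiv L' L'' \<Longrightarrow> swap_equiv L L''"
| swap_adjacent: "(fst p, fst q) \<in> E \<Longrightarrow> swap_equiv (P @ [p, q] @ S) (P @ [q, p] @ S)"

lemma swap_head: "(fst p, fst q) \<in> E \<Longrightarrow> swap_equiv (p # q # S) (q # p # S)"
  using swap_adjacent[of p q "[]" S] by simp

lemma swap_equiv_Cons: "swap_equiv L L' \<Longrightarrow> swap_equiv (x # L) (x # L')"
proof (induction rule: swap_equiv.induct)
  case (swap_adjacent p q P S)
  then show ?case using swap_equiv.swap_adjacent[of p q "x # P" S] by simp
qed (auto intro: swap_equiv.intros)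

text \<open>Normal forms are stored reversed: the head of the list is the last letter of the word.\<close>

fun push_nonone :: "'v \<Rightarrow> 'a \<Rightarrow> ('v \<times> 'a) list \<Rightarrow> ('v \<times> 'a) list" where
  "push_nonone z g [] = [(z, g)]"
| "push_nonone z g ((s, h) # L) =
     (if s = z then (if h \<otimes>\<^bsub>C z\<^esub> g = \<one>\<^bsub>C z\<^esub> then L else (z, h \<otimes>\<^bsub>C z\<^esub> g) # L)
      else if (s, z) \<in> E then (s, h) # push_nonone z g L
      else (z, g) # (s, h) # L)"

definition push :: "'v \<Rightarrow> 'a \<Rightarrow> ('v \<times> 'a) list \<Rightarrow> ('v \<times> 'a) list" where
  "push z g L = (if g = \<one>\<^bsub>C z\<^esub> then L else push_nonone z g L)"

fun meets :: "'v \<Rightarrow> ('v \<times> 'a) list \<Rightarrow> bool" where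
  "meets z [] = False"
| "meets z ((s, h) # L) = (s = z \<or> ((s, z) \<in> E \<and> meets z L))"

fun reduced :: "('v \<times> 'a) list \<Rightarrow> bool" where
  "reduced [] = True"
| "reduced ((s, h) # L) = (\<not> meets s L \<and> reduced L)"

definition proper :: "('v \<times> 'a) list \<Rightarrow> bool" where
  "proper L = (\<forall>(s, h) \<in> set L. s \<in> V \<and> h \<in> carrier (C s) \<and> h \<noteq> \<one>\<^bsub>C s\<^esub>)"

definition rnf :: "('v \<times> 'a) list \<Rightarrow> ('v \<times> 'a) list" where
  "rnf w = foldl (\<lambda>L (z, g). push z g L) [] w"

lemma push_nonone_swap_head:
  assumes "(fst p, fst q) \<in> E"
  shows "swap_equiv (push_nonone z g (p # q # S)) (push_nonone z g (q # p # S))"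
proof -
  obtain s1 h1 s2 h2 where pq: "p = (s1, h1)" "q = (s2, h2)" by fastforce
  have e: "(s1, s2) \<in> E" "(s2, s1) \<in> E" using assms pq edge_sym by auto
  have swap_tail: "swap_equiv (x # (s1, h1) # (s2, h2) # S) (x # (s2, h2) # (s1, h1) # S)" for x
    using swap_equiv_Cons[OF swap_head[of "(s1, h1)" "(s2, h2)"]] e by simp
  consider "s1 = z" | "s2 = z" | "s1 \<noteq> z" "s2 \<noteq> z" by blast
  then show ?thesis
  proof cases
    case 3
    have to_front: "swap_equiv ((s, h) # (z, g) # T) ((z, g) # (s, h) # T)" if "(s, z) \<in> E" for s h T
      using swap_head[of "(s, h)" "(z, g)" T] that by simp
    have "swap_equiv ((s1, h1) # (z, g) # (s2, h2) # S) ((z, g) # (s2, h2) # (s1, h1) # S)"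
      if "(s1, z) \<in> E"
      using swap_trans[OF to_front[OF that] swap_tail] .
    moreover have "swap_equiv ((z, g) # (s1, h1) # (s2, h2) # S) ((s2, h2) # (z, g) # (s1, h1) # S)"
      if "(s2, z) \<in> E"
      using swap_trans[OF swap_tail swap_sym[OF to_front[OF that]]] .
    ultimately show ?thesis
      using 3 pq e swap_head[of p q] swap_tail by (auto intro: swap_equiv_Cons)
  qed (use pq e in \<open>auto intro: swap_refl swap_head\<close>)
qed

lemma push_nonone_swap:
  assumes "(fst p, fst q) \<in> E"
  shows "swap_equiv (push_nonone z g (P @ [p, q] @ S)) (push_nonone z g (P @ [q, p] @ S))"
proof (induction P)
  case Nil
  then show ?case using push_nonone_swap_head[OF assms] by simp
next
  case (Cons a P)
  obtain s h where "a = (s, h)" by fastforce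
  with Cons show ?case
    using swap_adjacent[OF assms, of P S] by (simp add: swap_refl swap_equiv_Cons)
qed

lemma push_swap_equiv: "swap_equiv L L' \<Longrightarrow> swap_equiv (push z g L) (push z g L')"
proof (induction rule: swap_equiv.induct)
  case (swap_adjacent p q P S)
  then show ?case
    unfolding push_def using push_nonone_swap swap_equiv.swap_adjacent by simp
qed (auto intro: swap_equiv.intros)

lemma foldl_push_swap_equiv:
  "swap_equiv L L' \<Longrightarrow>
     swap_equiv (foldl (\<lambda>L (z, g). push z g L) L ys) (foldl (\<lambda>L (z, g). push z g L) L' ys)"
proof (induction ys arbitrary: L L')
  case (Cons y ys)
  obtain z g where "y = (z, g)" by fastforce
  then show ?case using Cons.IH[OF push_swap_equiv[OF Cons.prems]] by simp
qed simp

lemma meets_push_nonone: "(z, s) \<in> E \<Longrightarrow> meets s (push_nonone z g L) = meets s L"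
proof (induction L)
  case (Cons a L)
  obtain t h where "a = (t, h)" by fastforce
  with Cons show ?case by (cases "z = s") auto
qed auto

lemma reduced_push:
  assumes "reduced L"
  shows "reduced (push z g L)"
proof -
  have "reduced (push_nonone z g L)"
    using assms
  proof (induction L)
    case (Cons a L)
    obtain t h where "a = (t, h)" by fastforce
    with Cons show ?case using meets_push_nonone[OF edge_sym] by auto
  qed simp
  then show ?thesis using assms by (simp add: push_def)
qed

lemma proper_push:
  assumes "z \<in> V" "g \<in> carrier (C z)" "proper L"
  shows "proper (push z g L)"
proof -
  interpret monoid "C z" using factor_monoid assms(1) .
  have "proper (push_nonone z g L)" if "g \<noteq> \<one>\<^bsub>C z\<^esub>"
    using assms(3)
  proof (induction L)
    case (Cons a L)
    obtain t h where "a = (t, h)" by fastforce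
    with Cons assms that show ?case by (auto simp: proper_def)
  qed (use assms that in \<open>simp add: proper_def\<close>)
  then show ?thesis using assms(3) by (simp add: push_def)
qed

lemma push_nonone_not_meets: "\<not> meets z L \<Longrightarrow> swap_equiv (push_nonone z g L) ((z, g) # L)"
proof (induction L)
  case (Cons a L)
  obtain t h where a: "a = (t, h)" by fastforce
  show ?case
  proof (cases "(t, z) \<in> E")
    case True
    then have "t \<noteq> z" by auto
    have "swap_equiv ((t, h) # push_nonone z g L) ((t, h) # (z, g) # L)"
      using swap_equiv_Cons Cons True a by simp
    moreover have "swap_equiv ((t, h) # (z, g) # L) ((z, g) # (t, h) # L)"
      using swap_head[of "(t, h)" "(z, g)"] True by simp
    ultimately show ?thesis using swap_trans True \<open>t \<noteq> z\<close> a by simp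
  next
    case False
    then show ?thesis using Cons a by (simp add: swap_refl)
  qed
qed (simp add: swap_refl)

lemma push_nonone_mult:
  assumes z: "z \<in> V" and ab: "a \<in> carrier (C z)" "b \<in> carrier (C z)"
    and b1: "b \<noteq> \<one>\<^bsub>C z\<^esub>" and "proper L" "reduced L"
  shows "swap_equiv (push_nonone z b (push_nonone z a L)) (push z (a \<otimes>\<^bsub>C z\<^esub> b) L)"
  using assms(5,6)
proof (induction L)
  case Nil
  then show ?case using factor_monoid[OF z] ab by (simp add: push_def swap_refl monoid.l_one)
next
  interpret monoid "C z" using factor_monoid z .
  case (Cons x L)
  obtain s h where x: "x = (s, h)" by fastforce
  have L: "proper L" "reduced L" "\<not> meets s L" and h: "h \<in> carrier (C s)" "h \<noteq> \<one>\<^bsub>C s\<^esub>"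
    using Cons.prems x by (auto simp: proper_def)
  consider "s = z" | "s \<noteq> z" "(s, z) \<in> E" | "s \<noteq> z" "(s, z) \<notin> E" by blast
  then show ?case
  proof cases
    case 1
    have assoc: "h \<otimes>\<^bsub>C z\<^esub> (a \<otimes>\<^bsub>C z\<^esub> b) = (h \<otimes>\<^bsub>C z\<^esub> a) \<otimes>\<^bsub>C z\<^esub> b"
      using 1 h ab by (simp add: m_assoc)
    show ?thesis
    proof (cases "h \<otimes>\<^bsub>C z\<^esub> a = \<one>\<^bsub>C z\<^esub>")
      case True
      then have "h \<otimes>\<^bsub>C z\<^esub> (a \<otimes>\<^bsub>C z\<^esub> b) = b" using assoc ab by simp
      then show ?thesis
        using True 1 x h b1 push_nonone_not_meets[OF L(3)] by (auto simp: push_def swap_refl)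
    qed (use assoc 1 x h in \<open>auto simp: push_def swap_refl\<close>)
  next
    case 2
    then show ?thesis using swap_equiv_Cons[OF Cons.IH[OF L(1,2)], of x] x
      by (auto simp: push_def split: if_splits)
  qed (use x in \<open>auto simp: push_def swap_refl\<close>)
qed

lemma push_mult:
  assumes "z \<in> V" "a \<in> carrier (C z)" "b \<in> carrier (C z)" "proper L" "reduced L"
  shows "swap_equiv (push z b (push z a L)) (push z (a \<otimes>\<^bsub>C z\<^esub> b) L)"
proof -
  interpret monoid "C z" using factor_monoid assms(1) .
  show ?thesis
    using push_nonone_mult[OF assms(1-3) _ assms(4,5)] assms(2,3) by (auto simp: push_def swap_refl)
qed

lemma push_nonone_comm:
  assumes zt: "(z, t) \<in> E"
  shows "swap_equiv (push_nonone t b (push_nonone z a L)) (push_nonone z a (push_nonone t b L))"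
proof (induction L)
  case Nil
  then show ?case using zt edge_sym[OF zt] swap_head[of "(z, a)" "(t, b)" "[]"] by auto
next
  case (Cons x L)
  obtain s h where x: "x = (s, h)" by fastforce
  have "swap_equiv ((z, a) # (t, b) # x # L) ((t, b) # (z, a) # x # L)"
    using swap_head[of "(z, a)" "(t, b)"] zt by simp
  then show ?case using x zt edge_sym[OF zt] Cons.IH by (auto simp: swap_refl swap_equiv_Cons)
qed

lemma push_comm: "(z, t) \<in> E \<Longrightarrow> swap_equiv (push t b (push z a L)) (push z a (push t b L))"
  unfolding push_def using push_nonone_comm by (simp add: swap_refl)

abbreviation "W \<equiv> gp_words C V"
abbreviation "geq \<equiv> gp_eq C V E"

lemma words_append [simp]: "xs @ ys \<in> W \<longleftrightarrow> xs \<in> W \<and> ys \<in> W"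
  and words_Cons [simp]: "(z, g) # ys \<in> W \<longleftrightarrow> z \<in> V \<and> g \<in> carrier (C z) \<and> ys \<in> W"
  and words_Nil [simp]: "[] \<in> W"
  unfolding gp_words_def by auto

lemma geq_words: "geq w w' \<Longrightarrow> w \<in> W \<and> w' \<in> W"
proof (induction rule: gp_eq.induct)
  case (gp_mult xs ys v a b)
  then show ?case using monoid.m_closed[OF factor_monoid] by auto
next
  case (gp_unit xs ys v)
  then show ?case using monoid.one_closed[OF factor_monoid] by auto
next
  case (gp_comm xs ys u v a b)
  then show ?case using edge_vertices by auto
qed auto

lemma geq_in_context:
  "geq w w' \<Longrightarrow> xs \<in> W \<Longrightarrow> ys \<in> W \<Longrightarrow> geq (xs @ w @ ys) (xs @ w' @ ys)"
proof (induction rule: gp_eq.induct)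
  case (gp_mult xs0 ys0 v a b)
  then show ?case using gp_eq.gp_mult[of "xs @ xs0" C V "ys0 @ ys" v a b] by simp
next
  case (gp_unit xs0 ys0 v)
  then show ?case using gp_eq.gp_unit[of "xs @ xs0" C V "ys0 @ ys" v] by simp
next
  case (gp_comm xs0 ys0 u v a b)
  then show ?case using gp_eq.gp_comm[of "xs @ xs0" C V "ys0 @ ys" u v E a b] by simp
qed (auto intro: gp_eq.intros)

lemma geq_append_right: "geq w w' \<Longrightarrow> ys \<in> W \<Longrightarrow> geq (w @ ys) (w' @ ys)"
  using geq_in_context[of w w' "[]" ys] by simp

lemma geq_append: "geq a a' \<Longrightarrow> geq b b' \<Longrightarrow> geq (a @ b) (a' @ b')"
  using geq_in_context[of a a' "[]" b] geq_in_context[of b b' a' "[]"] geq_words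
  by (auto intro: gp_trans)

lemma geq_comm_last:
  "(u, v) \<in> E \<Longrightarrow> x \<in> W \<Longrightarrow> a \<in> carrier (C u) \<Longrightarrow> b \<in> carrier (C v) \<Longrightarrow>
     geq (x @ [(u, a), (v, b)]) (x @ [(v, b), (u, a)])"
  using gp_comm[of x C V "[]" u v E a b] by simp

lemma rnf_snoc [simp]: "rnf (w @ [(z, g)]) = push z g (rnf w)"
  unfolding rnf_def by simp

lemma rnf_append: "rnf (xs @ ys) = foldl (\<lambda>L (z, g). push z g L) (rnf xs) ys"
  unfolding rnf_def by simp

lemma rnf_proper_reduced: "w \<in> W \<Longrightarrow> proper (rnf w) \<and> reduced (rnf w)"
proof (induction w rule: rev_induct)
  case (snoc x w)
  obtain z g where "x = (z, g)" by fastforce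
  with snoc show ?case using proper_push reduced_push by auto
qed (simp add: rnf_def proper_def)

lemma rnf_swap_equiv: "geq w w' \<Longrightarrow> swap_equiv (rnf w) (rnf w')"
proof (induction rule: gp_eq.induct)
  case (gp_mult xs ys v a b)
  then have "swap_equiv (push v b (push v a (rnf xs))) (push v (a \<otimes>\<^bsub>C v\<^esub> b) (rnf xs))"
    using push_mult rnf_proper_reduced by blast
  then show ?case using foldl_push_swap_equiv by (simp add: rnf_append)
next
  case (gp_unit xs ys v)
  then show ?case by (simp add: rnf_append push_def swap_refl)
next
  case (gp_comm xs ys u v a b)
  then show ?case using foldl_push_swap_equiv[OF push_comm] by (simp add: rnf_append)
qed (auto intro: swap_equiv.intros)

lemma proper_rev_words: "proper L \<Longrightarrow> rev L \<in> W"
  unfolding proper_def gp_words_def by auto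

lemma push_represents:
  assumes z: "z \<in> V" and g: "g \<in> carrier (C z)" and L: "proper L"
  shows "geq (rev L @ [(z, g)]) (rev (push z g L))"
proof (cases "g = \<one>\<^bsub>C z\<^esub>")
  case True
  then show ?thesis
    using gp_unit[of "rev L" C V "[]" z E] z L proper_rev_words by (simp add: push_def)
next
  case g1: False
  have "geq (rev L @ [(z, g)]) (rev (push_nonone z g L))"
    using L
  proof (induction L)
    case Nil then show ?case using z g by (simp add: gp_refl)
  next
    case (Cons x L)
    obtain s h where x: "x = (s, h)" by fastforce
    have L: "proper L" and s: "s \<in> V" "h \<in> carrier (C s)"
      using Cons.prems x by (auto simp: proper_def)
    have rL: "rev L \<in> W" using proper_rev_words[OF L] .
    consider "s = z" | "s \<noteq> z" "(s, z) \<in> E" | "s \<noteq> z" "(s, z) \<notin> E" by blast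
    then show ?case
    proof cases
      case 1
      have merge: "geq (rev L @ [(z, h), (z, g)]) (rev L @ [(z, h \<otimes>\<^bsub>C z\<^esub> g)])"
        using gp_mult[of "rev L" C V "[]" z h g E] rL z g s 1 by simp
      have "geq (rev L @ [(z, h \<otimes>\<^bsub>C z\<^esub> g)]) (rev L)" if "h \<otimes>\<^bsub>C z\<^esub> g = \<one>\<^bsub>C z\<^esub>"
        using gp_unit[of "rev L" C V "[]" z E] that rL z by simp
      then show ?thesis using merge 1 x by (auto intro: gp_trans)
    next
      case 2
      have "geq (rev L @ [(s, h), (z, g)]) (rev L @ [(z, g), (s, h)])"
        using geq_comm_last[OF 2(2) rL s(2) g] .
      moreover have "geq (rev L @ [(z, g)] @ [(s, h)]) (rev (push_nonone z g L) @ [(s, h)])"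
        using geq_append_right[OF Cons.IH[OF L]] s by simp
      ultimately show ?thesis using 2 x by (auto intro: gp_trans)
    next
      case 3
      then show ?thesis using x rL s z g by (auto intro: gp_refl)
    qed
  qed
  then show ?thesis using g1 by (simp add: push_def)
qed

lemma rnf_represents: "w \<in> W \<Longrightarrow> geq w (rev (rnf w))"
proof (induction w rule: rev_induct)
  case Nil then show ?case by (simp add: rnf_def gp_refl)
next
  case (snoc x w)
  obtain z g where x: "x = (z, g)" by fastforce
  have w: "w \<in> W" "z \<in> V" "g \<in> carrier (C z)" using snoc x by auto
  have "geq (w @ [(z, g)]) (rev (rnf w) @ [(z, g)])"
    using geq_append_right[OF snoc.IH[OF w(1)]] w by simp
  moreover have "geq (rev (rnf w) @ [(z, g)]) (rev (push z g (rnf w)))"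
    using push_represents w rnf_proper_reduced by blast
  ultimately show ?case using x by (auto intro: gp_trans)
qed

fun ends_in_multiple :: "'v \<Rightarrow> 'a \<Rightarrow> ('v \<times> 'a) list \<Rightarrow> bool" where
  "ends_in_multiple u d [] = False"
| "ends_in_multiple u d ((s, h) # L) =
     ((s = u \<and> (\<exists>k \<in> carrier (C u). h = k \<otimes>\<^bsub>C u\<^esub> d)) \<or> ((s, u) \<in> E \<and> ends_in_multiple u d L))"

lemma ends_in_multiple_swap_equiv:
  "swap_equiv L L' \<Longrightarrow> ends_in_multiple u d L = ends_in_multiple u d L'"
proof (induction rule: swap_equiv.induct)
  case (swap_adjacent p q P S)
  then show ?case
  proof (induction P)
    case Nil
    obtain s1 h1 s2 h2 where "p = (s1, h1)" "q = (s2, h2)" by fastforce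
    with Nil show ?case using edge_sym by auto
  next
    case (Cons a P)
    obtain s h where "a = (s, h)" by fastforce
    with Cons show ?case by simp
  qed
qed auto

lemma ends_in_multiple_push_adjacent:
  "(v, u) \<in> E \<Longrightarrow> ends_in_multiple u d (push v c L) = ends_in_multiple u d L"
proof -
  assume vu: "(v, u) \<in> E"
  have "ends_in_multiple u d (push_nonone v c L) = ends_in_multiple u d L"
  proof (induction L)
    case (Cons x L)
    obtain s h where "x = (s, h)" by fastforce
    with Cons vu show ?case by (cases "v = u") auto
  qed (use vu in auto)
  then show ?thesis by (simp add: push_def)
qed

lemma ends_in_multiple_push_nonunit:
  assumes u: "u \<in> V" and d: "d \<in> carrier (C u)" "d \<notin> Units (C u)" and L: "proper L"
  shows "ends_in_multiple u d (push u d L)"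
proof -
  interpret monoid "C u" using factor_monoid u .
  have d1: "d \<noteq> \<one>\<^bsub>C u\<^esub>" using d by auto
  have "ends_in_multiple u d (push_nonone u d L)"
    using L
  proof (induction L)
    case (Cons x L)
    obtain s h where x: "x = (s, h)" by fastforce
    have L: "proper L" and h: "h \<in> carrier (C s)"
      using Cons.prems x by (auto simp: proper_def)
    consider "s = u" | "s \<noteq> u" "(s, u) \<in> E" | "s \<noteq> u" "(s, u) \<notin> E" by blast
    then show ?case
    proof cases
      case 1
      then have "h \<otimes>\<^bsub>C u\<^esub> d \<noteq> \<one>\<^bsub>C u\<^esub>"
        using right_cancellative_Units_of_left_inverse[OF factor_right_cancellative[OF u]] h d by blast
      then show ?thesis using 1 x h d by auto
    next
      case 2
      then show ?thesis using Cons.IH[OF L] x by simp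
    next
      case 3
      then show ?thesis using x d by (auto intro!: bexI[of _ "\<one>\<^bsub>C u\<^esub>"])
    qed
  qed (use d in \<open>auto intro!: bexI[of _ "\<one>\<^bsub>C u\<^esub>"]\<close>)
  then show ?thesis using d1 by (simp add: push_def)
qed

lemma ends_in_multiple_factor:
  assumes u: "u \<in> V" and d: "d \<in> carrier (C u)"
  shows "proper L \<Longrightarrow> ends_in_multiple u d L \<Longrightarrow> \<exists>z \<in> W. geq (rev L) (z @ [(u, d)])"
proof (induction L)
  case (Cons x L)
  obtain s h where x: "x = (s, h)" by fastforce
  have L: "proper L" and s: "s \<in> V" "h \<in> carrier (C s)"
    using Cons.prems x by (auto simp: proper_def)
  have rL: "rev L \<in> W" using proper_rev_words[OF L] .
  from Cons.prems x consider k where "s = u" "k \<in> carrier (C u)" "h = k \<otimes>\<^bsub>C u\<^esub> d"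
    | "(s, u) \<in> E" "ends_in_multiple u d L"
    by auto
  then show ?case
  proof cases
    case (1 k)
    have "geq (rev L @ [(u, k), (u, d)]) (rev L @ [(u, k \<otimes>\<^bsub>C u\<^esub> d)])"
      using gp_mult[of "rev L" C V "[]" u k d E] rL u 1 d by simp
    then have "geq (rev (x # L)) ((rev L @ [(u, k)]) @ [(u, d)])"
      using x 1 by (simp add: gp_sym)
    moreover have "rev L @ [(u, k)] \<in> W" using rL u 1 by simp
    ultimately show ?thesis by blast
  next
    case 2
    then obtain z where z: "z \<in> W" "geq (rev L) (z @ [(u, d)])" using Cons.IH[OF L] by blast
    have "geq (rev L @ [(s, h)]) (z @ [(u, d), (s, h)])"
      using geq_append_right[OF z(2)] s by simp
    moreover have "geq (z @ [(u, d), (s, h)]) ((z @ [(s, h)]) @ [(u, d)])"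
      using geq_comm_last[OF edge_sym[OF 2(1)] z(1) d s(2)] by simp
    ultimately have "geq (rev (x # L)) ((z @ [(s, h)]) @ [(u, d)])"
      using x by (auto intro: gp_trans)
    moreover have "z @ [(s, h)] \<in> W" using z s by simp
    ultimately show ?thesis by blast
  qed
qed simp

lemma common_right_multiple:
  assumes uv: "(u, v) \<in> E" and d: "d \<in> carrier (C u)" "d \<notin> Units (C u)"
    and x: "x \<in> W" and y: "y \<in> W" and eq: "geq (x @ [(v, c)]) (y @ [(u, d)])"
  shows "\<exists>z \<in> W. geq x (z @ [(u, d)])"
proof -
  have u: "u \<in> V" using edge_vertices uv by auto
  have "ends_in_multiple u d (push u d (rnf y))"
    using ends_in_multiple_push_nonunit[OF u d] rnf_proper_reduced y by blast
  then have "ends_in_multiple u d (push v c (rnf x))"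
    using ends_in_multiple_swap_equiv[OF rnf_swap_equiv[OF eq]] by simp
  then have "ends_in_multiple u d (rnf x)"
    using ends_in_multiple_push_adjacent edge_sym[OF uv] by simp
  then obtain z where "z \<in> W" "geq (rev (rnf x)) (z @ [(u, d)])"
    using ends_in_multiple_factor[OF u d(1)] rnf_proper_reduced x by blast
  then show ?thesis using gp_trans[OF rnf_represents[OF x]] by blast
qed

abbreviation "G \<equiv> graph_product C V E"
abbreviation cls :: "('v \<times> 'a) list \<Rightarrow> ('v \<times> 'a) list set" where
  "cls w \<equiv> gp_rel C V E `` {w}"

lemma gp_rel_iff [simp]: "(w, w') \<in> gp_rel C V E \<longleftrightarrow> geq w w'"
  unfolding gp_rel_def by simp

lemma cls_eq_iff: "w \<in> W \<Longrightarrow> cls w = cls w' \<longleftrightarrow> geq w w'"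
proof
  assume w: "w \<in> W" and eq: "cls w = cls w'"
  have "w \<in> cls w" using gp_refl[OF w] by simp
  then have "geq w' w" unfolding eq by simp
  then show "geq w w'" by (rule gp_sym)
next
  assume ww': "geq w w'"
  show "cls w = cls w'"
    using gp_trans[OF ww'] gp_trans[OF gp_sym[OF ww']] by auto
qed

lemma mult_cls:
  assumes "a \<in> W" "b \<in> W"
  shows "cls a \<otimes>\<^bsub>G\<^esub> cls b = cls (a @ b)"
proof -
  have "cls (x @ y) = cls (a @ b)" if "x \<in> cls a" "y \<in> cls b" for x y
    using that assms geq_append cls_eq_iff[of "a @ b" "x @ y"] by auto
  moreover have "a \<in> cls a" "b \<in> cls b"
    using assms by (simp_all add: gp_refl)
  then have "cls a \<noteq> {}" "cls b \<noteq> {}" by auto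
  ultimately show ?thesis
    unfolding graph_product_def by simp
qed

lemma carrier_graph_product: "carrier G = cls ` W"
  unfolding graph_product_def quotient_def by auto

lemma right_multiples_cls:
  "w \<in> W \<Longrightarrow> (\<lambda>X. X \<otimes>\<^bsub>G\<^esub> cls w) ` carrier G = {cls (x @ w) | x. x \<in> W}"
  unfolding carrier_graph_product using mult_cls by auto

lemma right_multiples_inter:
  assumes uv: "(u, v) \<in> E" and c: "c \<in> carrier (C v)"
    and d: "d \<in> carrier (C u)" "d \<notin> Units (C u)"
  shows "{cls (x @ [(v, c)]) | x. x \<in> W} \<inter> {cls (y @ [(u, d)]) | y. y \<in> W}
       = {cls (z @ [(v, c), (u, d)]) | z. z \<in> W}"
proof -
  have vc: "[(v, c)] \<in> W" and ud: "[(u, d)] \<in> W"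
    using edge_vertices[OF uv] c d by simp_all
  have swap_last: "cls (z @ [(u, d), (v, c)]) = cls (z @ [(v, c), (u, d)])" if "z \<in> W" for z
    using cls_eq_iff geq_comm_last[OF uv that d(1) c] that vc ud by simp
  show ?thesis
  proof (intro equalityI subsetI)
    fix X
    assume "X \<in> {cls (x @ [(v, c)]) | x. x \<in> W} \<inter> {cls (y @ [(u, d)]) | y. y \<in> W}"
    then obtain x y where x: "x \<in> W" "X = cls (x @ [(v, c)])"
      and y: "y \<in> W" "X = cls (y @ [(u, d)])"
      by blast
    have "geq (x @ [(v, c)]) (y @ [(u, d)])"
      using cls_eq_iff[of "x @ [(v, c)]" "y @ [(u, d)]"] x y vc by simp
    then obtain z where z: "z \<in> W" "geq x (z @ [(u, d)])"
      using common_right_multiple[OF uv d x(1) y(1)] by blast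
    have "geq (x @ [(v, c)]) (z @ [(u, d), (v, c)])"
      using geq_append_right[OF z(2) vc] by simp
    then have "X = cls (z @ [(u, d), (v, c)])"
      using x cls_eq_iff[of "x @ [(v, c)]"] vc by simp
    then show "X \<in> {cls (z @ [(v, c), (u, d)]) | z. z \<in> W}"
      using swap_last z(1) by blast
  next
    fix X
    assume "X \<in> {cls (z @ [(v, c), (u, d)]) | z. z \<in> W}"
    then obtain z where z: "z \<in> W" "X = cls (z @ [(v, c), (u, d)])" by blast
    have "X = cls ((z @ [(v, c)]) @ [(u, d)])" "X = cls ((z @ [(u, d)]) @ [(v, c)])"
      using z swap_last by simp_all
    moreover have "z @ [(v, c)] \<in> W" "z @ [(u, d)] \<in> W"
      using z vc ud by simp_all
    ultimately show "X \<in> {cls (x @ [(v, c)]) | x. x \<in> W} \<inter> {cls (y @ [(u, d)]) | y. y \<in> W}"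
      by blast
  qed
qed

end

theorem lemma2p5:
  fixes C :: "'v \<Rightarrow> 'a monoid" and V :: "'v set" and E :: "('v \<times> 'v) set"
  assumes "is_graph V E"
    and "\<And>v. v \<in> V \<Longrightarrow> right_cancellative_monoid (C v)"
    and "(u, v) \<in> E"
    and "c \<in> carrier (C v)" and "c \<notin> Units (C v)"
    and "d \<in> carrier (C u)" and "d \<notin> Units (C u)"
  shows "(\<lambda>x. x \<otimes>\<^bsub>graph_product C V E\<^esub> gp_inj C V E v c) ` carrier (graph_product C V E)
       \<inter> (\<lambda>x. x \<otimes>\<^bsub>graph_product C V E\<^esub> gp_inj C V E u d) ` carrier (graph_product C V E)
       = (\<lambda>x. x \<otimes>\<^bsub>graph_product C V E\<^esub>
               (gp_inj C V E v c \<otimes>\<^bsub>graph_product C V E\<^esub> gp_inj C V E u d))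
           ` carrier (graph_product C V E)"
proof -
  \<comment> \<open>Only d needs to be a non-unit.\<close>
  interpret graph_product_setting C V E
    using assms(1,2) by unfold_locales
  have vc: "[(v, c)] \<in> W" and ud: "[(u, d)] \<in> W"
    using edge_vertices[OF assms(3)] assms(4,6) by simp_all
  have "gp_inj C V E v c \<otimes>\<^bsub>G\<^esub> gp_inj C V E u d = cls [(v, c), (u, d)]"
    unfolding gp_inj_def using mult_cls[OF vc ud] by simp
  moreover have "[(v, c), (u, d)] \<in> W" using vc ud by simp
  ultimately show ?thesis
    unfolding gp_inj_def using right_multiples_cls vc ud right_multiples_inter[OF assms(3,4,6,7)]
    by simp
qed

end
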